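(* Let $g>0$, $\beta>0$, $\lambda\ge1$ an integer, and $0\le\mu_1\le\mu_2\le\cdots\le\mu_{2\lambda}\le1$. Then \[ -2g^2\coth(\tfrac{\beta}{2})+\frac{4g^2\cosh(\beta(1-\mu_{2\lambda}))}{\sinh\beta}+\xi_{2\lambda}(\boldsymbol{\mu}_{2\lambda},\beta)+\psi^-_{2\lambda}(\boldsymbol{\mu}_{2\lambda},\beta)\le 0, \] that is, $\Theta_{2\lambda}(g,\beta,\boldsymbol{\mu}_{2\lambda})\le 1$.
   Context: Fix $g>0$. For an integer $\lambda\ge1$, a vector $\boldsymbol{\mu}_\lambda=(\mu_1,\dots,\mu_\lambda)$ with $\mu_0:=0$, and $t>0$, define \[ \xi_\lambda(\boldsymbol{\mu}_\lambda,t)=-\frac{8g^2}{\sinh t}\sinh^2\!\big(\tfrac{t}{2}(1-\mu_\lambda)\big)(-1)^\lambda\sum_{\gamma=0}^{\lambda}(-1)^\gamma\cosh(t\mu_\gamma)-\frac{4g^2}{\sinh t}\sum_{\substack{0\le i<j\le\lambda-1\\ j-i\ \text{odd}}}\big(\cosh(t(1-\mu_{j+1}))-\cosh(t(1-\mu_j))\big)\big(\cosh(t\mu_i)-\cosh(t\mu_{i+1})\big), \] \[ \psi^-_\lambda(\boldsymbol{\mu}_\lambda,t)=\frac{4g^2}{\sinh t}\Big[\sum_{\gamma=0}^{\lambda}(-1)^\gamma\sinh\big(t(\tfrac12-\mu_\gamma)\big)\Big]^2, \] \[ \Theta_{2\lambda}(g,\beta,\boldsymbol{\mu}_{2\lambda})=\exp\Big(-2g^2\coth(\tfrac{\beta}{2})+\frac{4g^2\cosh(\beta(1-\mu_{2\lambda}))}{\sinh\beta}+\xi_{2\lambda}(\boldsymbol{\mu}_{2\lambda},\beta)+\psi^-_{2\lambda}(\boldsymbol{\mu}_{2\lambda},\beta)\Big).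 \] *)

theory Defs
  imports "HOL-Analysis.Analysis"
begin

(* The vector mu_lambda = (mu_1,...,mu_lambda) is represented by a function
   mu :: nat => real; only indices 1..lambda are used, and the convention
   mu_0 := 0 is enforced by muz. *)
definition muz :: "(nat \<Rightarrow> real) \<Rightarrow> nat \<Rightarrow> real" where
  "muz mu i = (if i = 0 then 0 else mu i)"

definition xi :: "real \<Rightarrow> nat \<Rightarrow> (nat \<Rightarrow> real) \<Rightarrow> real \<Rightarrow> real" where
  "xi g lam mu t =
     - (8 * g^2 / sinh t) * (sinh ((t/2) * (1 - muz mu lam)))^2 * (-1)^lam
         * (\<Sum>\<gamma>=0..lam. (-1)^\<gamma> * cosh (t * muz mu \<gamma>))
     - (4 * g^2 / sinh t) *
         (\<Sum>(i,j)\<in>{(i,j). i < j \<and> j \<le> lam - 1 \<and> odd (j - i)}.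
            (cosh (t * (1 - muz mu (j+1))) - cosh (t * (1 - muz mu j)))
            * (cosh (t * muz mu i) - cosh (t * muz mu (i+1))))"

definition psi_minus :: "real \<Rightarrow> nat \<Rightarrow> (nat \<Rightarrow> real) \<Rightarrow> real \<Rightarrow> real" where
  "psi_minus g lam mu t =
     (4 * g^2 / sinh t) * (\<Sum>\<gamma>=0..lam. (-1)^\<gamma> * sinh (t * (1/2 - muz mu \<gamma>)))^2"

definition Theta_exponent :: "real \<Rightarrow> real \<Rightarrow> nat \<Rightarrow> (nat \<Rightarrow> real) \<Rightarrow> real" where
  "Theta_exponent g \<beta> lam mu =
     - 2 * g^2 * (cosh (\<beta>/2) / sinh (\<beta>/2))
     + 4 * g^2 * cosh (\<beta> * (1 - muz mu (2*lam))) / sinh \<beta>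
     + xi g (2*lam) mu \<beta> + psi_minus g (2*lam) mu \<beta>"

definition Theta :: "real \<Rightarrow> real \<Rightarrow> nat \<Rightarrow> (nat \<Rightarrow> real) \<Rightarrow> real" where
  "Theta g \<beta> lam mu = exp (Theta_exponent g \<beta> lam mu)"

end

theory Submission
  imports Defs
begin

text \<open>
  With \<open>x\<^sub>k = e\<^bsup>\<beta>\<mu>\<^sub>k\<^esup>\<close> (so \<open>x\<^sub>0 = 1\<close>) and \<open>q = e\<^sup>\<beta>\<close>, every hyperbolic term is a rational
  function of the \<open>x\<^sub>k\<close>, and the alternating sums \<open>X = \<Sum>(-1)\<^sup>k x\<^sub>k\<close>, \<open>Y = \<Sum>(-1)\<^sup>k/x\<^sub>k\<close>
  carry all the information. Two steps at a time, the exponent of \<open>\<Theta>\<^sub>2\<^sub>\<lambda>\<close> turns out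
  to be \<open>-(4g\<^sup>2/sinh \<beta>)(q+1)/4\<close> times a quadratic form \<open>F\<close> in the partial alternating sums.
  Abel summation rewrites \<open>2(1 - 1/q) F\<close> as a sum of squares weighted by
  \<open>x\<^sub>k\<^sub>+\<^sub>1\<^sup>2 - x\<^sub>k\<^sup>2\<close>, \<open>1/x\<^sub>k\<^sup>2 - 1/x\<^sub>k\<^sub>+\<^sub>1\<^sup>2\<close>, \<open>1 - x\<^sub>n\<^sup>2/q\<^sup>2\<close> and \<open>1/x\<^sub>n\<^sup>2 - 1/q\<^sup>2\<close>, all nonnegative
  because \<open>0 \<le> \<mu>\<^sub>1 \<le> \<dots> \<le> \<mu>\<^sub>2\<^sub>\<lambda> \<le> 1\<close>. Hence \<open>F \<ge> 0\<close> and the exponent is \<open>\<le> 0\<close>.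
\<close>

definition alt_sum :: "(nat \<Rightarrow> real) \<Rightarrow> nat \<Rightarrow> real" where
  "alt_sum f n = (\<Sum>k=0..n. (-1)^k * f k)"

lemma alt_sum_0 [simp]: "alt_sum f 0 = f 0"
  by (simp add: alt_sum_def)

lemma alt_sum_Suc [simp]: "alt_sum f (Suc n) = alt_sum f n - (-1)^n * f (Suc n)"
  by (simp add: alt_sum_def)

lemma alt_sum_linear:
  "alt_sum (\<lambda>k. a * f k + b * g k) n = a * alt_sum f n + b * alt_sum g n"
  by (simp add: alt_sum_def sum.distrib sum_distrib_left algebra_simps)

definition up_cross_sum :: "(nat \<Rightarrow> real) \<Rightarrow> nat \<Rightarrow> real" where
  "up_cross_sum x n = (\<Sum>k<n. (-1)^Suc k * x (Suc k) * (alt_sum (\<lambda>i. 1 / x i) k - 1))"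

definition down_cross_sum :: "(nat \<Rightarrow> real) \<Rightarrow> nat \<Rightarrow> real" where
  "down_cross_sum x n = (\<Sum>k<n. (-1)^Suc k / x (Suc k) * (alt_sum x k - 1))"

lemma up_cross_sum_Suc [simp]:
  "up_cross_sum x (Suc n) = up_cross_sum x n - (-1)^n * x (Suc n) * (alt_sum (\<lambda>i. 1 / x i) n - 1)"
  by (simp add: up_cross_sum_def)

lemma down_cross_sum_Suc [simp]:
  "down_cross_sum x (Suc n) = down_cross_sum x n - (-1)^n / x (Suc n) * (alt_sum x n - 1)"
  by (simp add: down_cross_sum_def)

lemma cross_sums_add:
  assumes "\<And>k. x k \<noteq> 0" "x 0 = 1"
  shows "up_cross_sum x n + down_cross_sum x n
           = (alt_sum x n - 1) * (alt_sum (\<lambda>i. 1 / x i) n - 1) - n"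
proof (induction n)
  case (Suc n)
  have "(-1)^n * x (Suc n) * ((-1)^n / x (Suc n)) = (1::real)"
    using assms(1)[of "Suc n"] by simp
  with Suc.IH show ?case by (simp add: algebra_simps diff_divide_distrib)
qed (simp add: assms up_cross_sum_def down_cross_sum_def)

lemma summation_by_parts_up:
  assumes "\<And>k. x k \<noteq> 0" "x 0 = 1"
  shows "(\<Sum>k<n. (alt_sum (\<lambda>i. 1 / x i) k - 1) * (x (Suc k)^2 - x k^2))
           = (alt_sum (\<lambda>i. 1 / x i) n - 1) * x n^2 - (alt_sum x n - 1)"
proof (induction n)
  case (Suc n)
  show ?case unfolding sum.lessThan_Suc Suc.IH using assms(1)[of "Suc n"]
    by (simp add: field_simps power2_eq_square)
qed (simp add: assms)

lemma summation_by_parts_up_sq: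
  assumes "\<And>k. x k \<noteq> 0" "x 0 = 1"
  shows "(\<Sum>k<n. (alt_sum (\<lambda>i. 1 / x i) k - 1)^2 * (x (Suc k)^2 - x k^2))
           = (alt_sum (\<lambda>i. 1 / x i) n - 1)^2 * x n^2 - 2 * up_cross_sum x n - n"
proof (induction n)
  case (Suc n)
  show ?case unfolding sum.lessThan_Suc Suc.IH using assms(1)[of "Suc n"]
    by (simp add: field_simps power2_eq_square)
qed (simp add: assms up_cross_sum_def)

lemma summation_by_parts_down:
  assumes "\<And>k. x k \<noteq> 0" "x 0 = 1"
  shows "(\<Sum>k<n. (alt_sum x k - 1) * (1 / x k^2 - 1 / x (Suc k)^2))
           = (alt_sum (\<lambda>i. 1 / x i) n - 1) - (alt_sum x n - 1) / x n^2"
proof (induction n)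
  case (Suc n)
  show ?case unfolding sum.lessThan_Suc Suc.IH using assms(1)[of "Suc n"] assms(1)[of n]
    by (simp add: field_simps power2_eq_square)
qed (simp add: assms)

lemma summation_by_parts_down_sq:
  assumes "\<And>k. x k \<noteq> 0" "x 0 = 1"
  shows "(\<Sum>k<n. (alt_sum x k - 1)^2 * (1 / x k^2 - 1 / x (Suc k)^2))
           = 2 * down_cross_sum x n + n - (alt_sum x n - 1)^2 / x n^2"
proof (induction n)
  case (Suc n)
  show ?case unfolding sum.lessThan_Suc Suc.IH using assms(1)[of "Suc n"] assms(1)[of n]
    by (simp add: field_simps power2_eq_square)
qed (simp add: assms down_cross_sum_def)

definition alt_form :: "(nat \<Rightarrow> real) \<Rightarrow> real \<Rightarrow> nat \<Rightarrow> real" where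
  "alt_form x q n = n * (1 + 1/q) + 2 * down_cross_sum x n + 2/q * up_cross_sum x n"

lemma sum_weighted_square:
  fixes a b :: "'b::comm_ring_1"
  shows "(\<Sum>k\<in>S. (a + b * f k)^2 * d k)
           = a^2 * (\<Sum>k\<in>S. d k) + 2 * a * b * (\<Sum>k\<in>S. f k * d k) + b^2 * (\<Sum>k\<in>S. f k^2 * d k)"
  by (simp add: power2_eq_square algebra_simps sum.distrib sum_distrib_left)

text \<open>Expanding the squares and summing by parts, the cross sums combine through
  \<open>cross_sums_add\<close>; every weight on the right is nonnegative once \<open>x\<close> increases from \<open>1\<close> to at most \<open>q\<close>.\<close>

lemma alt_form_sum_of_squares:
  fixes x :: "nat \<Rightarrow> real" and q :: real and n :: nat
  defines "A \<equiv> alt_sum x n - 1" and "B \<equiv> alt_sum (\<lambda>i. 1 / x i) n - 1"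
  assumes x: "\<And>k. x k \<noteq> 0" "x 0 = 1" and q: "q \<noteq> 0"
  shows "2 * (1 - 1/q) * alt_form x q n =
      (\<Sum>k<n. (B + (1/q - 1) * (alt_sum (\<lambda>i. 1 / x i) k - 1))^2 * (x (Suc k)^2 - x k^2))
    + (\<Sum>k<n. (A / q + (1 - 1/q) * (alt_sum x k - 1))^2 * (1 / x k^2 - 1 / x (Suc k)^2))
    + B^2 * (1 - x n^2 / q^2) + A^2 * (1 / x n^2 - 1 / q^2)"
proof -
  have tel_up: "(\<Sum>k<n. x (Suc k)^2 - x k^2) = x n^2 - 1"
    using sum_lessThan_telescope[of "\<lambda>k. x k^2" n] x(2) by simp
  have tel_down: "(\<Sum>k<n. 1 / x k^2 - 1 / x (Suc k)^2) = 1 - 1 / x n^2"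
    using sum_lessThan_telescope'[of "\<lambda>k. 1 / x k^2" n] x(2) by simp
  have up: "up_cross_sum x n = A * B - n - down_cross_sum x n"
    using cross_sums_add[of x n, OF x] unfolding A_def B_def by simp
  show ?thesis
    unfolding sum_weighted_square tel_up tel_down
      summation_by_parts_up[of x n, OF x] summation_by_parts_up_sq[of x n, OF x]
      summation_by_parts_down[of x n, OF x] summation_by_parts_down_sq[of x n, OF x]
      alt_form_def up A_def[symmetric] B_def[symmetric]
    using x(1)[of n] q by (simp add: field_simps power2_eq_square)
qed

lemma alt_form_nonneg:
  fixes x :: "nat \<Rightarrow> real"
  assumes pos: "\<And>k. x k > 0" and x0: "x 0 = 1" and q: "q > 1"
    and mono: "\<And>k. k < n \<Longrightarrow> x k \<le> x (Suc k)" and top: "x n \<le> q"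
  shows "alt_form x q n \<ge> 0"
proof -
  have sq_mono: "x k^2 \<le> x (Suc k)^2" "1 / x (Suc k)^2 \<le> 1 / x k^2" if "k < n" for k
    using mono[OF that] pos[of k] by (auto intro!: power_mono divide_left_mono)
  have top_sq: "x n^2 / q^2 \<le> 1" "1 / q^2 \<le> 1 / x n^2"
    using top pos[of n] q by (auto intro!: power_mono divide_left_mono)
  have x_ne: "x k \<noteq> 0" for k
    using pos[of k] by simp
  have q_ne: "q \<noteq> 0"
    using q by simp
  have "0 \<le> 2 * (1 - 1/q) * alt_form x q n"
    unfolding alt_form_sum_of_squares[of x q n, OF x_ne x0 q_ne]
    using sq_mono top_sq
    by (intro add_nonneg_nonneg sum_nonneg mult_nonneg_nonneg) auto
  moreover have "0 < 2 * (1 - 1/q)" using q by (simp add: field_simps)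
  ultimately show ?thesis by (simp add: zero_le_mult_iff)
qed

lemma muz_0 [simp]: "muz mu 0 = 0"
  by (simp add: muz_def)

definition inner_pair_sum :: "real \<Rightarrow> (nat \<Rightarrow> real) \<Rightarrow> nat \<Rightarrow> real" where
  "inner_pair_sum t mu j =
     (\<Sum>i<j. if odd (j - i) then cosh (t * muz mu i) - cosh (t * muz mu (i+1)) else 0)"

definition pair_sum :: "real \<Rightarrow> (nat \<Rightarrow> real) \<Rightarrow> nat \<Rightarrow> real" where
  "pair_sum t mu L =
     (\<Sum>j<L. (cosh (t * (1 - muz mu (j+1))) - cosh (t * (1 - muz mu j))) * inner_pair_sum t mu j)"

text \<open>Since \<open>i < j\<close> forces \<open>j \<ge> 1\<close>, the truncated bound \<open>j \<le> L - 1\<close> in \<open>xi\<close> means \<open>j < L\<close>.\<close>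

lemma sum_odd_pairs:
  fixes f :: "nat \<Rightarrow> nat \<Rightarrow> real"
  shows "(\<Sum>(i,j)\<in>{(i,j). i < j \<and> j \<le> L - 1 \<and> odd (j - i)}. f i j)
           = (\<Sum>j<L. \<Sum>i<j. if odd (j - i) then f i j else 0)"
proof -
  have "{(i,j). i < j \<and> j \<le> L - 1 \<and> odd (j - i)}
          = prod.swap ` (SIGMA j:{..<L}. {i. i < j \<and> odd (j - i)})"
    by auto
  then have "(\<Sum>(i,j)\<in>{(i,j). i < j \<and> j \<le> L - 1 \<and> odd (j - i)}. f i j)
               = (\<Sum>(j,i)\<in>(SIGMA j:{..<L}. {i. i < j \<and> odd (j - i)}). f i j)"
    by (simp add: sum.reindex)
  also have "\<dots> = (\<Sum>j<L. \<Sum>i\<in>{i. i < j \<and> odd (j - i)}. f i j)"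
    by (rule sum.Sigma[symmetric]) auto
  also have "\<dots> = (\<Sum>j<L. \<Sum>i<j. if odd (j - i) then f i j else 0)"
  proof (rule sum.cong[OF refl])
    fix j :: nat
    have "{i. i < j \<and> odd (j - i)} = {i \<in> {..<j}. odd (j - i)}"
      by auto
    then show "(\<Sum>i\<in>{i. i < j \<and> odd (j - i)}. f i j) = (\<Sum>i<j. if odd (j - i) then f i j else 0)"
      by (simp only: sum.inter_filter[OF finite_lessThan])
  qed
  finally show ?thesis .
qed

lemma inner_pair_sum_Suc:
  "inner_pair_sum t mu (Suc j) = 1 - cosh (t * muz mu (Suc j)) - inner_pair_sum t mu j"
proof -
  have "inner_pair_sum t mu (Suc j)
          = (\<Sum>i<j. (cosh (t * muz mu i) - cosh (t * muz mu (Suc i)))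
                    - (if odd (j - i) then cosh (t * muz mu i) - cosh (t * muz mu (i+1)) else 0))
            + (cosh (t * muz mu j) - cosh (t * muz mu (Suc j)))"
    unfolding inner_pair_sum_def sum.lessThan_Suc
    by (simp add: Suc_diff_le) (intro sum.cong; simp)
  also have "\<dots> = (\<Sum>i<j. cosh (t * muz mu i) - cosh (t * muz mu (Suc i))) - inner_pair_sum t mu j
            + (cosh (t * muz mu j) - cosh (t * muz mu (Suc j)))"
    by (simp only: sum_subtractf[where f = "\<lambda>i. cosh (t * muz mu i) - cosh (t * muz mu (Suc i))"]
        inner_pair_sum_def)
  also have "\<dots> = 1 - cosh (t * muz mu (Suc j)) - inner_pair_sum t mu j"
    using sum_lessThan_telescope'[of "\<lambda>i. cosh (t * muz mu i)" j] by simp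
  finally show ?thesis .
qed

lemma inner_pair_sum_even:
  "inner_pair_sum t mu (2 * n) = 1 - alt_sum (\<lambda>k. cosh (t * muz mu k)) (2 * n)"
  by (induction n) (simp_all add: inner_pair_sum_Suc inner_pair_sum_def)

definition theta_core :: "real \<Rightarrow> (nat \<Rightarrow> real) \<Rightarrow> nat \<Rightarrow> real" where
  "theta_core t mu L =
     - (1 + cosh t) / 2 + cosh (t * (1 - muz mu L))
     - 2 * sinh ((t/2) * (1 - muz mu L))^2 * alt_sum (\<lambda>k. cosh (t * muz mu k)) L
     - pair_sum t mu L + (alt_sum (\<lambda>k. sinh (t * (1/2 - muz mu k))) L)^2"

lemma coth_half: "(t::real) \<noteq> 0 \<Longrightarrow> cosh (t/2) / sinh (t/2) = (1 + cosh t) / sinh t"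
  using sinh_double[of "t/2"] cosh_double_cosh[of "t/2"]
  by (simp add: field_simps power2_eq_square)

lemma Theta_exponent_eq_theta_core:
  assumes "t > 0"
  shows "Theta_exponent g t lam mu = 4 * g^2 / sinh t * theta_core t mu (2 * lam)"
proof -
  have "(\<Sum>(i,j)\<in>{(i,j). i < j \<and> j \<le> 2 * lam - 1 \<and> odd (j - i)}.
           (cosh (t * (1 - muz mu (j+1))) - cosh (t * (1 - muz mu j)))
           * (cosh (t * muz mu i) - cosh (t * muz mu (i+1)))) = pair_sum t mu (2 * lam)"
    unfolding sum_odd_pairs pair_sum_def inner_pair_sum_def sum_distrib_left
    by (intro sum.cong refl) simp
  then have xi: "xi g (2 * lam) mu t =
          - (8 * g^2 / sinh t) * sinh ((t/2) * (1 - muz mu (2 * lam)))^2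
              * alt_sum (\<lambda>k. cosh (t * muz mu k)) (2 * lam)
          - 4 * g^2 / sinh t * pair_sum t mu (2 * lam)"
    unfolding xi_def alt_sum_def by simp
  have psi: "psi_minus g (2 * lam) mu t =
          4 * g^2 / sinh t * (alt_sum (\<lambda>k. sinh (t * (1/2 - muz mu k))) (2 * lam))^2"
    unfolding psi_minus_def alt_sum_def ..
  have "t \<noteq> 0" "sinh t \<noteq> 0"
    using assms by simp_all
  then show ?thesis
    unfolding Theta_exponent_def theta_core_def coth_half[OF \<open>t \<noteq> 0\<close>] xi psi
    by (simp add: field_simps)
qed

definition exp_mu :: "real \<Rightarrow> (nat \<Rightarrow> real) \<Rightarrow> nat \<Rightarrow> real" where
  "exp_mu t mu k = exp (t * muz mu k)"

lemma exp_mu_pos: "exp_mu t mu k > 0"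
  by (simp add: exp_mu_def)

lemma exp_mu_0: "exp_mu t mu 0 = 1"
  by (simp add: exp_mu_def)

lemma cosh_diff_exp: "cosh (a - b :: real) = (exp a / exp b + exp b / exp a) / 2"
  and sinh_diff_exp: "sinh (a - b :: real) = (exp a / exp b - exp b / exp a) / 2"
  by (simp_all add: cosh_def sinh_def exp_diff exp_minus field_simps)

lemma cosh_muz_eq: "cosh (t * muz mu k) = (exp_mu t mu k + 1 / exp_mu t mu k) / 2"
  by (simp add: exp_mu_def cosh_def exp_minus field_simps)

lemma cosh_one_minus_muz_eq:
  "cosh (t * (1 - muz mu k)) = (exp t / exp_mu t mu k + exp_mu t mu k / exp t) / 2"
  unfolding right_diff_distrib mult_1_right cosh_diff_exp exp_mu_def by (simp add: field_simps)

lemma alt_sum_cosh_muz: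
  "alt_sum (\<lambda>k. cosh (t * muz mu k)) L
     = (alt_sum (exp_mu t mu) L + alt_sum (\<lambda>k. 1 / exp_mu t mu k) L) / 2"
proof -
  have "(\<lambda>k. cosh (t * muz mu k)) = (\<lambda>k. 1/2 * exp_mu t mu k + 1/2 * (1 / exp_mu t mu k))"
    unfolding cosh_muz_eq by (simp add: field_simps)
  then show ?thesis
    by (simp only: alt_sum_linear) (simp add: field_simps)
qed

lemma alt_sum_sinh_half_minus_muz:
  "alt_sum (\<lambda>k. sinh (t * (1/2 - muz mu k))) L
     = (exp (t/2) * alt_sum (\<lambda>k. 1 / exp_mu t mu k) L - alt_sum (exp_mu t mu) L / exp (t/2)) / 2"
proof -
  have "sinh (t * (1/2 - muz mu k))
          = exp (t/2) / 2 * (1 / exp_mu t mu k) + (- 1 / (2 * exp (t/2))) * exp_mu t mu k" for k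
    using sinh_diff_exp[of "t/2" "t * muz mu k"] by (simp add: exp_mu_def right_diff_distrib field_simps)
  then show ?thesis
    by (simp only: alt_sum_linear) (simp add: field_simps)
qed

text \<open>\<open>theta_core\<close> in the variables \<open>q = e\<^sup>t\<close>, \<open>r = e\<^bsup>t/2\<^esup>\<close>, \<open>w = x\<^sub>L\<close>, \<open>X = \<Sum>(-1)\<^sup>k x\<^sub>k\<close>,
  \<open>Y = \<Sum>(-1)\<^sup>k/x\<^sub>k\<close> and \<open>T = pair_sum t mu L\<close>, where \<open>x\<^sub>k = exp_mu t mu k\<close>.\<close>

definition core_poly :: "real \<Rightarrow> real \<Rightarrow> real \<Rightarrow> real \<Rightarrow> real \<Rightarrow> real \<Rightarrow> real" where
  "core_poly q r w X Y T =
     - (1 + (q + 1/q) / 2) / 2 + (q/w + w/q) / 2 - ((q/w + w/q) / 2 - 1) * (X + Y) / 2 - T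
     + ((r * Y - X / r) / 2)^2"

lemma theta_core_eq_core_poly:
  "theta_core t mu L = core_poly (exp t) (exp (t/2)) (exp_mu t mu L)
     (alt_sum (exp_mu t mu) L) (alt_sum (\<lambda>k. 1 / exp_mu t mu k) L) (pair_sum t mu L)"
proof -
  have sinh_sq_L: "sinh ((t/2) * (1 - muz mu L))^2 = (cosh (t * (1 - muz mu L)) - 1) / 2"
    using cosh_double[of "(t/2) * (1 - muz mu L)"] cosh_square_eq[of "(t/2) * (1 - muz mu L)"] by simp
  have cosh_t: "cosh t = (exp t + 1 / exp t) / 2"
    by (simp add: cosh_def exp_minus field_simps)
  show ?thesis
    unfolding theta_core_def core_poly_def alt_sum_cosh_muz alt_sum_sinh_half_minus_muz
      sinh_sq_L cosh_one_minus_muz_eq cosh_t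
    using exp_mu_pos[of t mu L] by (simp add: field_simps)
qed

lemma core_poly_two_steps:
  fixes q r w u v X Y T :: real
  assumes "r > 0" "q = r^2" "w > 0" "u > 0" "v > 0"
  shows "core_poly q r v (X - u + v) (Y - 1/u + 1/v)
           (T + ((q/u + u/q)/2 - (q/w + w/q)/2) * (1 - (X + Y)/2)
              + ((q/v + v/q)/2 - (q/u + u/q)/2) * (1 - (u + 1/u)/2 - (1 - (X + Y)/2)))
       = core_poly q r w X Y T
         + - (q + 1)/4 * (2 * (1 + 1/q) + 2 * (- (X - 1)/u - u * (Y - 1)/q)
                        + 2 * ((X - u - 1)/v + v * (Y - 1/u - 1)/q))"
  using assms unfolding core_poly_def by (simp add: field_simps power2_eq_square)

text \<open>The parity pattern of \<open>inner_pair_sum\<close> has period two and only even lengths give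
  it a closed form (\<open>inner_pair_sum_even\<close>), so the induction advances two indices at a time.\<close>

lemma theta_core_even:
  "theta_core t mu (2 * n) = - (exp t + 1)/4 * alt_form (exp_mu t mu) (exp t) (2 * n)"
proof (induction n)
  case 0
  have "exp t = exp (t/2)^2"
    by (simp add: power2_eq_square flip: exp_add)
  then show ?case
    unfolding theta_core_eq_core_poly
    by (simp add: exp_mu_0 pair_sum_def alt_form_def up_cross_sum_def down_cross_sum_def
        core_poly_def field_simps power2_eq_square)
next
  case (Suc n)
  define L where "L = 2 * n"
  define q r where "q = exp t" and "r = exp (t/2)"
  define w u v
    where "w = exp_mu t mu L" and "u = exp_mu t mu (Suc L)" and "v = exp_mu t mu (Suc (Suc L))"
  define X Y
    where "X = alt_sum (exp_mu t mu) L" and "Y = alt_sum (\<lambda>k. 1 / exp_mu t mu k) L"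
  have qr: "q = r^2"
    unfolding q_def r_def by (simp add: power2_eq_square flip: exp_add)
  have sign: "(-1::real)^L = 1"
    unfolding L_def by simp
  have pos: "r > 0" "w > 0" "u > 0" "v > 0"
    unfolding r_def w_def u_def v_def by (simp_all add: exp_mu_pos)
  have inner_L: "inner_pair_sum t mu L = 1 - (X + Y)/2"
    unfolding L_def inner_pair_sum_even alt_sum_cosh_muz X_def Y_def ..
  have pair_sum_step: "pair_sum t mu (Suc (Suc L)) = pair_sum t mu L
      + ((q/u + u/q)/2 - (q/w + w/q)/2) * (1 - (X + Y)/2)
      + ((q/v + v/q)/2 - (q/u + u/q)/2) * (1 - (u + 1/u)/2 - (1 - (X + Y)/2))"
    by (simp add: pair_sum_def inner_pair_sum_Suc inner_L cosh_one_minus_muz_eq cosh_muz_eq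
        q_def u_def v_def w_def)
  define S where "S = 2 * (1 + 1/q) + 2 * (- (X - 1)/u - u * (Y - 1)/q)
                        + 2 * ((X - u - 1)/v + v * (Y - 1/u - 1)/q)"
  have alt_form_step: "alt_form (exp_mu t mu) q (Suc (Suc L)) = alt_form (exp_mu t mu) q L + S"
    using pos sign unfolding alt_form_def S_def X_def Y_def u_def v_def q_def
    by (simp add: field_simps)
  have IH: "core_poly q r w X Y (pair_sum t mu L) = - (q + 1)/4 * alt_form (exp_mu t mu) q L"
    using Suc.IH unfolding theta_core_eq_core_poly L_def q_def r_def w_def X_def Y_def by simp
  have "theta_core t mu (Suc (Suc L))
          = core_poly q r v (X - u + v) (Y - 1/u + 1/v) (pair_sum t mu (Suc (Suc L)))"
    unfolding theta_core_eq_core_poly q_def r_def u_def v_def X_def Y_def using sign by simp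
  also have "\<dots> = core_poly q r w X Y (pair_sum t mu L) + - (q + 1)/4 * S"
    unfolding pair_sum_step S_def by (rule core_poly_two_steps[OF pos(1) qr pos(2-4)])
  also have "\<dots> = - (q + 1)/4 * alt_form (exp_mu t mu) q (Suc (Suc L))"
    unfolding IH alt_form_step distrib_left ..
  finally show ?case
    unfolding L_def q_def by simp
qed

lemma exp_mu_mono:
  assumes "t \<ge> 0" and "0 \<le> mu 1" and "\<And>i. 1 \<le> i \<Longrightarrow> i < N \<Longrightarrow> mu i \<le> mu (i + 1)"
    and "k < N"
  shows "exp_mu t mu k \<le> exp_mu t mu (Suc k)"
proof -
  have "muz mu k \<le> muz mu (Suc k)"
    using assms(2,4) assms(3)[of k] by (cases "k = 0") (simp_all add: muz_def)
  then show ?thesis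
    using assms(1) by (simp add: exp_mu_def mult_left_mono)
qed

lemma exp_mu_le_exp:
  assumes "t \<ge> 0" and "muz mu k \<le> 1"
  shows "exp_mu t mu k \<le> exp t"
  using mult_left_mono[OF assms(2,1)] by (simp add: exp_mu_def)

theorem mainTheorem2:
  fixes g \<beta> :: real and lam :: nat and mu :: "nat \<Rightarrow> real"
  assumes "g > 0" and "\<beta> > 0" and "lam \<ge> 1"
    and "0 \<le> mu 1"
    and "\<And>i. 1 \<le> i \<Longrightarrow> i < 2 * lam \<Longrightarrow> mu i \<le> mu (i + 1)"
    and "mu (2 * lam) \<le> 1"
  shows "Theta_exponent g \<beta> lam mu \<le> 0 \<and> Theta g \<beta> lam mu \<le> 1"
proof -
  have "muz mu (2 * lam) \<le> 1"
    using assms(3,6) by (simp add: muz_def)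
  then have form_nonneg: "alt_form (exp_mu \<beta> mu) (exp \<beta>) (2 * lam) \<ge> 0"
    using assms(2,4,5)
    by (intro alt_form_nonneg exp_mu_pos exp_mu_0 exp_mu_mono exp_mu_le_exp) auto
  have "- (exp \<beta> + 1)/4 \<le> 0"
    by (intro divide_nonpos_pos neg_le_0_iff_le[THEN iffD2] add_nonneg_nonneg) simp_all
  then have "theta_core \<beta> mu (2 * lam) \<le> 0"
    unfolding theta_core_even using form_nonneg by (rule mult_nonpos_nonneg)
  then have "Theta_exponent g \<beta> lam mu \<le> 0"
    unfolding Theta_exponent_eq_theta_core[OF assms(2)] using assms(1,2)
    by (intro mult_nonneg_nonpos) auto
  then show ?thesis
    unfolding Theta_def by simp
qed

end
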